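(* Fix a constant $c > 0$ and consider RLS-GP with $F = \{\mathrm{AND}, \mathrm{OR}\}$, $L = \{x_1, \ldots, x_n\}$, tree size limit $\ell \ge n$, target $h \in \{\mathrm{AND}_n, \mathrm{OR}_n\}$, using in each iteration a fresh training set of $s = n^c \lg^2 n$ inputs sampled uniformly at random from $\{0,1\}^n$, and terminating when the sampled error of its current solution is at most $c' \lg n$, where $c'$ is an appropriately large constant. Then with probability at least $1 - O(\log^2(n)/n)$, during the first $O(\log n)$ iterations and while the expected sampled error ($s$ times the generalisation error) of its current solution remains above $(c'/4)\lg n$, RLS-GP does not accept any mutation which (1) inserts a copy of a variable already present in the current solution, (2) inserts an undesired function node (an OR node when $h = \mathrm{AND}_n$, an AND node when $h = \mathrm{OR}_n$), or (3) increases the generalisation error of the current solution.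
   Context: Programs are finite rooted binary trees (the empty tree is allowed) whose internal nodes are labelled by binary Boolean functions from $F$ and whose leaves are labelled by literals from $L$; a program computes a Boolean function of $(x_1,\dots,x_n)$ in the obvious way. $\mathrm{AND}_n(x) = x_1 \wedge \dots \wedge x_n$, $\mathrm{OR}_n(x) = x_1 \vee \dots \vee x_n$. The generalisation error of $X$ is $|\{x \in \{0,1\}^n : X(x) \ne h(x)\}|/2^n$. In each iteration a fresh training set of $s$ inputs is drawn independently and uniformly at random from $\{0,1\}^n$; the sampled error $f(X)$ of a program $X$ in that iteration is the number of sampled inputs on which $X$ differs from $h$; parent and offspring are evaluated on the same training set. LeafCount$(X)$ is the number of leaves. HVL-Prime with subtree deletion, applied to a tree $X$: choose $op \in \{\mathrm{INS}, \mathrm{DEL}, \mathrm{SUB}\}$, a literal $l \in L$ and a function $g \in F$, independently and uniformly at random. If $X$ is empty, the result is the single leaf $l$. Otherwise: if $op = \mathrm{INS}$, choose a node $x$ of $X$ uniformly at random and replace it by a new node labelled $g$ whose two children are the subtree rooted at $x$ and a new leaf $l$, in uniformly random order; if $op = \mathrm{DEL}$, choose a node $x$ of $X$ (leaf or internal) uniformly at random and replace the parent of $x$ by the sibling of $x$; if $op = \mathrm{SUB}$, choose a leaf of $X$ uniformly at random and replace it by $l$. RLS-GP with tree size limit $\ell$: start with the empty tree $X$; in each iteration let $X' := $ HVL-Prime$(X)$, and if LeafCount$(X') \le \ell$ and $f(X') \le f(X)$ then set $X := X'$. $\lg$ is the base-2 logarithm; asymptotics are as $n \to \infty$. *)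

theory Defs
  imports "HOL-Probability.Probability"
begin

text \<open>Function symbols F = {AND, OR}; literals x_1..x_n are encoded as indices 0..n-1.\<close>
datatype fsym = AND | OR

datatype gp = E | L nat | N fsym gp gp

datatype mop = INS | DEL | SUB

definition inputs :: "nat \<Rightarrow> bool list set" where
  "inputs n = {x. length x = n}"

fun apply_f :: "fsym \<Rightarrow> bool \<Rightarrow> bool \<Rightarrow> bool" where
  "apply_f AND a b = (a \<and> b)"
| "apply_f OR a b = (a \<or> b)"

fun eval :: "gp \<Rightarrow> bool list \<Rightarrow> bool" where
  "eval E x = False"
| "eval (L i) x = x ! i"
| "eval (N g a b) x = apply_f g (eval a x) (eval b x)"

definition target :: "fsym \<Rightarrow> nat \<Rightarrow> bool list \<Rightarrow> bool" where
  "target h n x = (case h of AND \<Rightarrow> (\<forall>i<n. x ! i) | OR \<Rightarrow> (\<exists>i<n. x ! i))"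

text \<open>Convention: the empty tree is wrong on every input (worst possible program).\<close>
definition wrong :: "fsym \<Rightarrow> nat \<Rightarrow> gp \<Rightarrow> bool list \<Rightarrow> bool" where
  "wrong h n X x = (X = E \<or> eval X x \<noteq> target h n x)"

definition gen_err :: "fsym \<Rightarrow> nat \<Rightarrow> gp \<Rightarrow> real" where
  "gen_err h n X = real (card {x \<in> inputs n. wrong h n X x}) / 2 ^ n"

definition samp_err :: "fsym \<Rightarrow> nat \<Rightarrow> bool list list \<Rightarrow> gp \<Rightarrow> nat" where
  "samp_err h n T X = length (filter (wrong h n X) T)"

fun leafcount :: "gp \<Rightarrow> nat" where
  "leafcount E = 0"
| "leafcount (L i) = 1"
| "leafcount (N g a b) = leafcount a + leafcount b"

fun vars :: "gp \<Rightarrow> nat set" where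
  "vars E = {}"
| "vars (L i) = {i}"
| "vars (N g a b) = vars a \<union> vars b"

text \<open>Node positions as paths (False = left child, True = right child).\<close>
fun positions :: "gp \<Rightarrow> bool list set" where
  "positions E = {}"
| "positions (L i) = {[]}"
| "positions (N g a b) = insert [] ((Cons False) ` positions a \<union> (Cons True) ` positions b)"

fun leafpos :: "gp \<Rightarrow> bool list set" where
  "leafpos E = {}"
| "leafpos (L i) = {[]}"
| "leafpos (N g a b) = (Cons False) ` leafpos a \<union> (Cons True) ` leafpos b"

fun subt :: "gp \<Rightarrow> bool list \<Rightarrow> gp" where
  "subt t [] = t"
| "subt (N g a b) (False # p) = subt a p"
| "subt (N g a b) (True # p) = subt b p"
| "subt t p = E"

fun repl :: "gp \<Rightarrow> bool list \<Rightarrow> gp \<Rightarrow> gp" where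
  "repl t [] u = u"
| "repl (N g a b) (False # p) u = N g (repl a p u) b"
| "repl (N g a b) (True # p) u = N g a (repl b p u)"
| "repl t p u = t"

text \<open>Subtree deletion at node p: the parent of p is replaced by the sibling of p;
  deleting the root yields the empty tree.\<close>
definition del_at :: "gp \<Rightarrow> bool list \<Rightarrow> gp" where
  "del_at X p = (if p = [] then E
     else repl X (butlast p) (subt X (butlast p @ [\<not> last p])))"

definition hvl :: "nat \<Rightarrow> gp \<Rightarrow> (mop \<times> nat \<times> fsym \<times> gp) pmf" where
  "hvl n X =
    bind_pmf (pmf_of_set {INS, DEL, SUB}) (\<lambda>op.
    bind_pmf (pmf_of_set {..<n}) (\<lambda>l.
    bind_pmf (pmf_of_set {AND, OR}) (\<lambda>g.
    map_pmf (\<lambda>X'. (op, l, g, X'))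
     (if X = E then return_pmf (L l)
      else (case op of
        INS \<Rightarrow> bind_pmf (pmf_of_set (positions X)) (\<lambda>p.
                 map_pmf (\<lambda>b. repl X p (if b then N g (subt X p) (L l) else N g (L l) (subt X p)))
                   (pmf_of_set {True, False}))
      | DEL \<Rightarrow> map_pmf (del_at X) (pmf_of_set (positions X))
      | SUB \<Rightarrow> map_pmf (\<lambda>p. repl X p (L l)) (pmf_of_set (leafpos X)))))))"

fun sample :: "nat \<Rightarrow> nat \<Rightarrow> bool list list pmf" where
  "sample 0 n = return_pmf []"
| "sample (Suc k) n = bind_pmf (pmf_of_set (inputs n)) (\<lambda>x. map_pmf (Cons x) (sample k n))"

definition lg :: "nat \<Rightarrow> real" where
  "lg n = log 2 (real n)"

definition tsize :: "real \<Rightarrow> nat \<Rightarrow> nat" where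
  "tsize c n = nat \<lceil>real n powr c * (lg n)^2\<rceil>"

definition bad_move :: "fsym \<Rightarrow> nat \<Rightarrow> gp \<Rightarrow> mop \<Rightarrow> nat \<Rightarrow> fsym \<Rightarrow> gp \<Rightarrow> bool" where
  "bad_move h n X op l g X' =
     ((op = INS \<and> X \<noteq> E \<and> l \<in> vars X)
    \<or> (op = INS \<and> X \<noteq> E \<and> g \<noteq> h)
    \<or> gen_err h n X' > gen_err h n X)"

text \<open>State: (current tree, observation window closed, bad acceptance seen).
  The window closes when RLS-GP terminates or when the expected sampled error
  s * gen_err drops to at most (c'/4) lg n.\<close>
definition step :: "real \<Rightarrow> real \<Rightarrow> nat \<Rightarrow> nat \<Rightarrow> fsym \<Rightarrow> gp \<times> bool \<times> bool \<Rightarrow> (gp \<times> bool \<times> bool) pmf" where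
  "step c c' n sizelim h st = (case st of (X, stopped, bad) \<Rightarrow>
     if stopped then return_pmf st
     else if real (tsize c n) * gen_err h n X \<le> c' / 4 * lg n then return_pmf (X, True, bad)
     else bind_pmf (sample (tsize c n) n) (\<lambda>T.
       if real (samp_err h n T X) \<le> c' * lg n then return_pmf (X, True, bad)
       else map_pmf (\<lambda>(op, l, g, X').
              let acc = (leafcount X' \<le> sizelim \<and> samp_err h n T X' \<le> samp_err h n T X)
              in (if acc then X' else X, False, bad \<or> (acc \<and> bad_move h n X op l g X')))
            (hvl n X)))"

fun run :: "real \<Rightarrow> real \<Rightarrow> nat \<Rightarrow> nat \<Rightarrow> fsym \<Rightarrow> nat \<Rightarrow> (gp \<times> bool \<times> bool) pmf" where
  "run c c' n sizelim h 0 = return_pmf (E, False, False)"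
| "run c c' n sizelim h (Suc k) = bind_pmf (run c c' n sizelim h k) (step c c' n sizelim h)"

end

theory Submission
  imports Defs
begin

text \<open>
  The invariant of the run is that the current tree is empty
  or a read-once tree of \<open>h\<close>-nodes; such a tree with \<open>k\<close> variables computes \<open>h\<close> over
  them and errs on exactly \<open>2^(n-k) - 1\<close> inputs. From such a tree every mutation either
  inserts a variable already present (probability at most \<open>k/n\<close>), or is harmless (it keeps
  the invariant, adds at most one variable and does not increase the error), or keeps every
  error of the parent and adds new errors of total density at least half the parent's error.
  While \<open>s\<close> times the error exceeds \<open>(c'/4) lg n\<close>, a mutation of the last kind survives
  \<open>s\<close> fresh samples with probability at most \<open>(1 - gen_err/2)^s \<le> 1/n\<close> once \<open>c' \<ge> 8\<close>.
  After \<open>t\<close> iterations the tree has at most \<open>t\<close> variables, so a union bound over the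
  first \<open>O(log n)\<close> iterations gives the failure probability \<open>O(log\<^sup>2 n / n)\<close>.
\<close>

section \<open>Read-once trees\<close>

definition neutral :: "fsym \<Rightarrow> bool" where
  "neutral h = (h = AND)"

fun read_once :: "fsym \<Rightarrow> gp \<Rightarrow> bool" where
  "read_once h E = False"
| "read_once h (L i) = True"
| "read_once h (N g a b) = (g = h \<and> read_once h a \<and> read_once h b \<and> vars a \<inter> vars b = {})"

fun vars_outside :: "gp \<Rightarrow> bool list \<Rightarrow> nat set" where
  "vars_outside (N g a b) (False # p) = vars_outside a p \<union> vars b"
| "vars_outside (N g a b) (True # p) = vars a \<union> vars_outside b p"
| "vars_outside t p = {}"

definition computes :: "fsym \<Rightarrow> nat set \<Rightarrow> gp \<Rightarrow> bool" where
  "computes h V Y = (Y \<noteq> E \<and> (\<forall>x. (eval Y x = neutral h) = (\<forall>i\<in>V. x ! i = neutral h)))"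

lemma apply_f_eq_neutral_iff: "(apply_f h a b = neutral h) = (a = neutral h \<and> b = neutral h)"
  by (cases h) (auto simp: neutral_def)

lemma apply_f_other_eq_neutral_iff:
  "g \<noteq> h \<Longrightarrow> (apply_f g a b = neutral h) = (a = neutral h \<or> b = neutral h)"
  by (cases h; cases g) (auto simp: neutral_def)

lemma target_eq_neutral_iff: "(target h n x = neutral h) = (\<forall>i<n. x ! i = neutral h)"
  by (cases h) (auto simp: neutral_def target_def)

lemma finite_vars [simp]: "finite (vars X)"
  by (induction X) auto

lemma finite_positions [simp]: "finite (positions X)"
  by (induction X) auto

lemma finite_leafpos [simp]: "finite (leafpos X)"
  by (induction X) auto

lemma read_once_leafpos_nonempty: "read_once h X \<Longrightarrow> leafpos X \<noteq> {}"
  by (induction X) auto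

lemma read_once_vars_nonempty: "read_once h X \<Longrightarrow> vars X \<noteq> {}"
  by (induction X) auto

lemma computes_read_once: "read_once h X \<Longrightarrow> computes h (vars X) X"
proof -
  assume "read_once h X"
  then have "(eval X x = neutral h) = (\<forall>i\<in>vars X. x ! i = neutral h)" for x
    by (induction X) (auto simp: apply_f_eq_neutral_iff)
  with \<open>read_once h X\<close> show ?thesis
    by (auto simp: computes_def)
qed

lemma computes_leaf: "computes h {i} (L i)"
  by (simp add: computes_def)

lemma vars_split_at: "p \<in> positions X \<Longrightarrow> vars X = vars_outside X p \<union> vars (subt X p)"
  by (induction X arbitrary: p) auto

lemma read_once_vars_outside_disjoint:
  "read_once h X \<Longrightarrow> p \<in> positions X \<Longrightarrow> vars_outside X p \<inter> vars (subt X p) = {}"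
  by (induction X arbitrary: p) (use vars_split_at in fastforce)+

lemma read_once_subt: "read_once h X \<Longrightarrow> p \<in> positions X \<Longrightarrow> read_once h (subt X p)"
  by (induction X arbitrary: p) auto

lemma vars_repl: "p \<in> positions X \<Longrightarrow> vars (repl X p u) = vars_outside X p \<union> vars u"
  by (induction X arbitrary: p) auto

lemma read_once_repl:
  "read_once h X \<Longrightarrow> p \<in> positions X \<Longrightarrow> read_once h u \<Longrightarrow> vars_outside X p \<inter> vars u = {}
    \<Longrightarrow> read_once h (repl X p u)"
  by (induction X arbitrary: p) (use vars_repl vars_split_at in fastforce)+

lemma computes_eval: "computes h V Y \<Longrightarrow> (eval Y x = neutral h) = (\<forall>i\<in>V. x ! i = neutral h)"
  by (simp add: computes_def)

lemma eval_repl_eq_neutral_iff: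
  "read_once h X \<Longrightarrow> p \<in> positions X \<Longrightarrow>
    (eval (repl X p u) x = neutral h) = ((\<forall>i\<in>vars_outside X p. x ! i = neutral h) \<and> eval u x = neutral h)"
proof (induction X arbitrary: p)
  case (N g a b)
  then have "g = h" and a: "read_once h a" and b: "read_once h b" by auto
  note eval_a = computes_eval[OF computes_read_once[OF a]]
    and eval_b = computes_eval[OF computes_read_once[OF b]]
  show ?case
  proof (cases p)
    case (Cons d q)
    with N.prems have "q \<in> positions (if d then b else a)" by (cases d) auto
    with Cons \<open>g = h\<close> show ?thesis
      using N.IH(1)[OF a] N.IH(2)[OF b] eval_a eval_b
      by (cases d) (auto simp: apply_f_eq_neutral_iff)
  qed simp
qed auto

lemma repl_neq_E: "p \<in> positions X \<Longrightarrow> u \<noteq> E \<Longrightarrow> repl X p u \<noteq> E"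
  by (induction X arbitrary: p) auto

lemma computes_repl:
  assumes "read_once h X" "p \<in> positions X" "computes h V u"
  shows "computes h (vars_outside X p \<union> V) (repl X p u)"
  using assms eval_repl_eq_neutral_iff[OF assms(1,2)] repl_neq_E[OF assms(2)]
  by (auto simp: computes_def)

lemma leafpos_subt_leaf: "p \<in> leafpos X \<Longrightarrow> p \<in> positions X \<and> (\<exists>j. subt X p = L j)"
  by (induction X arbitrary: p) auto

lemma subt_E [simp]: "subt E p = E"
  by (cases p) auto

lemma Nil_in_positions_iff [simp]: "([] \<in> positions X) = (X \<noteq> E)"
  by (cases X) auto

lemma subt_append: "subt X (p @ r) = subt (subt X p) r"
  by (induction X p rule: subt.induct) auto

lemma positions_append: "(p @ r \<in> positions X) = (p \<in> positions X \<and> r \<in> positions (subt X p))"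
  by (induction X p rule: subt.induct) auto

section \<open>Counting errors\<close>

lemma finite_inputs [simp]: "finite (inputs n)"
  using finite_lists_length_eq[of "UNIV :: bool set" n] by (simp add: inputs_def)

lemma card_inputs: "card (inputs n) = 2 ^ n"
  using card_lists_length_eq[of "UNIV :: bool set" n] by (simp add: inputs_def)

lemma card_inputs_fixing:
  assumes "V \<subseteq> {..<n}"
  shows "card {x \<in> inputs n. \<forall>i\<in>V. x ! i = v} * 2 ^ card V = 2 ^ n"
proof -
  have "finite V" using assms finite_subset by blast
  then show ?thesis using assms
  proof (induction V rule: finite_subset_induct)
    case empty
    then show ?case by (simp add: card_inputs)
  next
    case (insert a V)
    define S where "S = {x \<in> inputs n. \<forall>i\<in>V. x ! i = v}"
    have flip: "x[a := w] \<in> S" if "x \<in> S" for x w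
    proof -
      have "x[a := w] ! i = x ! i" if "i \<in> V" for i
        using that insert.hyps by (subst nth_list_update_neq) auto
      with \<open>x \<in> S\<close> show ?thesis by (simp add: S_def inputs_def)
    qed
    have "bij_betw (\<lambda>x. x[a := \<not> v]) {x \<in> S. x ! a = v} {x \<in> S. x ! a \<noteq> v}"
      by (rule bij_betw_byWitness[where f' = "\<lambda>x. x[a := v]"])
        (use flip insert.hyps in \<open>auto simp: S_def inputs_def list_update_same_conv\<close>)
    then have "card {x \<in> S. x ! a \<noteq> v} = card {x \<in> S. x ! a = v}"
      by (simp add: bij_betw_same_card)
    moreover have "card S = card {x \<in> S. x ! a = v} + card {x \<in> S. x ! a \<noteq> v}"
      by (subst card_Un_disjoint[symmetric]) (auto simp: S_def intro: arg_cong[where f = card])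
    ultimately have "card S = 2 * card {x \<in> S. x ! a = v}"
      by simp
    moreover have "{x \<in> inputs n. \<forall>i\<in>insert a V. x ! i = v} = {x \<in> S. x ! a = v}"
      by (auto simp: S_def)
    ultimately show ?case
      using insert by (simp add: S_def card_insert_if mult.commute mult.left_commute)
  qed
qed

definition err_set :: "fsym \<Rightarrow> nat \<Rightarrow> gp \<Rightarrow> bool list set" where
  "err_set h n X = {x \<in> inputs n. wrong h n X x}"

lemma finite_err_set [simp]: "finite (err_set h n X)"
  by (simp add: err_set_def)

lemma gen_err_eq: "gen_err h n X = card (err_set h n X) / 2 ^ n"
  by (simp add: gen_err_def err_set_def)

lemma wrong_computes:
  assumes "computes h V X" "V \<subseteq> {..<n}"
  shows "wrong h n X x = ((\<forall>i\<in>V. x ! i = neutral h) \<and> \<not> (\<forall>i<n. x ! i = neutral h))"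
proof -
  have "wrong h n X x = ((eval X x = neutral h) \<noteq> (target h n x = neutral h))"
    using assms(1) by (auto simp: wrong_def computes_def)
  then show ?thesis
    using assms target_eq_neutral_iff[of h n x] by (auto simp: computes_def)
qed

lemma err_set_computes:
  assumes "computes h V X" "V \<subseteq> {..<n}"
  shows "err_set h n X = {x \<in> inputs n. \<forall>i\<in>V. x ! i = neutral h} - {replicate n (neutral h)}"
proof -
  have "(\<forall>i<n. x ! i = neutral h) = (x = replicate n (neutral h))" if "x \<in> inputs n" for x
    using that by (simp add: inputs_def list_eq_iff_nth_eq)
  then show ?thesis
    by (auto simp: err_set_def wrong_computes[OF assms])
qed

lemma card_err_set_computes:
  assumes "computes h V X" "V \<subseteq> {..<n}"
  shows "(card (err_set h n X) + 1) * 2 ^ card V = 2 ^ n"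
proof -
  define A where "A = {x \<in> inputs n. \<forall>i\<in>V. x ! i = neutral h}"
  have "replicate n (neutral h) \<in> A"
    using assms(2) by (auto simp: A_def inputs_def)
  then have "card (err_set h n X) + 1 = card A"
    using err_set_computes[OF assms] card_Diff_singleton[of _ A] card_gt_0_iff[of A]
    by (auto simp: A_def)
  then show ?thesis
    using card_inputs_fixing[OF assms(2)] by (simp add: A_def)
qed

lemma card_err_set_antimono:
  assumes "computes h V X" "V \<subseteq> {..<n}" "computes h V' X'" "V' \<subseteq> {..<n}" "card V \<le> card V'"
  shows "card (err_set h n X') \<le> card (err_set h n X)"
proof -
  have "(card (err_set h n X') + 1) * 2 ^ card V' = (card (err_set h n X) + 1) * 2 ^ card V"
    using card_err_set_computes[OF assms(1,2)] card_err_set_computes[OF assms(3,4)] by simp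
  also have "\<dots> \<le> (card (err_set h n X) + 1) * 2 ^ card V'"
    using assms(5) by (intro mult_le_mono2 power_increasing) simp_all
  finally show ?thesis
    by simp
qed

lemma gen_err_antimono:
  assumes "computes h V X" "V \<subseteq> {..<n}" "computes h V' X'" "V' \<subseteq> {..<n}" "card V \<le> card V'"
  shows "gen_err h n X' \<le> gen_err h n X"
  using card_err_set_antimono[OF assms] by (simp add: gen_err_eq divide_right_mono)

lemma card_le_double_if_inj_on_parts:
  fixes P :: "'a \<Rightarrow> bool"
  assumes "finite B" "f ` A \<subseteq> B" "\<And>v. inj_on f {x \<in> A. P x = v}"
  shows "card A \<le> 2 * card B"
proof -
  have "A = {x \<in> A. P x = True} \<union> {x \<in> A. P x = False}"
    by auto
  then have "card A \<le> card {x \<in> A. P x = True} + card {x \<in> A. P x = False}"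
    by (metis card_Un_le)
  also have "\<dots> \<le> card B + card B"
    using assms(1,2) assms(3)[of True] assms(3)[of False] by (intro add_mono card_inj_on_le) auto
  finally show ?thesis
    by simp
qed

definition much_worse :: "fsym \<Rightarrow> nat \<Rightarrow> gp \<Rightarrow> gp \<Rightarrow> bool" where
  "much_worse h n X X' =
     (err_set h n X \<subseteq> err_set h n X' \<and> card (err_set h n X) \<le> 2 * card (err_set h n X' - err_set h n X))"

lemma much_worse_if_err_set_doubles:
  assumes "err_set h n X \<subseteq> err_set h n X'" "2 * card (err_set h n X) \<le> card (err_set h n X')"
  shows "much_worse h n X X'"
  using assms by (simp add: much_worse_def card_Diff_subset)

lemma much_worse_if_computes_fewer:
  assumes "computes h V X" "V \<subseteq> {..<n}" "computes h V' X'" "V' \<subset> V"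
  shows "much_worse h n X X'"
proof (rule much_worse_if_err_set_doubles)
  define e e' where "e = card (err_set h n X)" and "e' = card (err_set h n X')"
  have V': "V' \<subseteq> {..<n}"
    using assms by auto
  show "err_set h n X \<subseteq> err_set h n X'"
    using err_set_computes[OF assms(1,2)] err_set_computes[OF assms(3) V'] assms(4) by auto
  have "finite V"
    using assms(2) finite_subset by blast
  then have "2 * 2 ^ card V' \<le> (2::nat) ^ card V"
    using psubset_card_mono[OF _ assms(4)] by (simp flip: power_Suc)
  then have "(e + 1) * (2 * 2 ^ card V') \<le> (e + 1) * 2 ^ card V"
    by (rule mult_le_mono2)
  also have "\<dots> = (e' + 1) * 2 ^ card V'"
    using card_err_set_computes[OF assms(1,2)] card_err_set_computes[OF assms(3) V']
    by (simp add: e_def e'_def)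
  finally have "2 * (e + 1) * 2 ^ card V' \<le> (e' + 1) * 2 ^ card V'"
    by (simp add: ac_simps)
  then have "2 * (e + 1) \<le> e' + 1"
    by (rule mult_right_le_imp_le) simp
  then show "2 * card (err_set h n X) \<le> card (err_set h n X')"
    by (simp add: e_def e'_def)
qed

lemma err_set_E: "err_set h n E = inputs n"
  by (simp add: err_set_def wrong_def)

lemma much_worse_E:
  assumes "computes h V X" "V \<subseteq> {..<n}" "V \<noteq> {}"
  shows "much_worse h n X E"
proof (rule much_worse_if_err_set_doubles)
  show "err_set h n X \<subseteq> err_set h n E"
    by (auto simp: err_set_def wrong_def)
  have "finite V"
    using assms(2) finite_subset by blast
  with assms(3) have "2 \<le> (2::nat) ^ card V"
    by (simp add: Suc_leI card_gt_0_iff self_le_power)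
  then have "(card (err_set h n X) + 1) * 2 \<le> 2 ^ n"
    using card_err_set_computes[OF assms(1,2)] mult_le_mono2 by metis
  then show "2 * card (err_set h n X) \<le> card (err_set h n E)"
    by (simp add: err_set_E card_inputs)
qed

lemma wrong_if_eval_neutral:
  "\<not> (\<forall>i<n. x ! i = neutral h) \<Longrightarrow> eval X x = neutral h \<Longrightarrow> wrong h n X x"
  using target_eq_neutral_iff[of h n x] by (auto simp: wrong_def)

text \<open>The map \<open>x \<mapsto> x[b := \<not> neutral h, l := neutral h]\<close> sends errors of \<open>X\<close> to new errors
  of \<open>X'\<close>; it forgets only \<open>x ! l\<close>, so it is at most two-to-one.\<close>

lemma much_worse_by_flip:
  assumes X: "computes h V X" "V \<subseteq> {..<n}" and b: "b \<in> V" and l: "l \<notin> V" "l < n"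
    and mono: "\<And>x. eval X x = neutral h \<Longrightarrow> eval X' x = neutral h"
    and flip: "\<And>x. length x = n \<Longrightarrow> \<forall>i\<in>V. x ! i = neutral h \<Longrightarrow>
      eval X' (x[b := \<not> neutral h, l := neutral h]) = neutral h"
  shows "much_worse h n X X'"
proof -
  define f where "f x = x[b := \<not> neutral h, l := neutral h]" for x :: "bool list"
  have "b < n" "b \<noteq> l"
    using X(2) b l by auto
  have err_X: "x \<in> err_set h n X \<longleftrightarrow>
      length x = n \<and> (\<forall>i\<in>V. x ! i = neutral h) \<and> \<not> (\<forall>i<n. x ! i = neutral h)" for x
    by (simp add: err_set_def inputs_def wrong_computes[OF X])
  have sub: "err_set h n X \<subseteq> err_set h n X'"
  proof
    fix x assume x: "x \<in> err_set h n X"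
    then have "eval X x = neutral h"
      using X(1) by (simp add: err_X computes_def)
    with x have "wrong h n X' x"
      using mono wrong_if_eval_neutral[of n x h X'] by (simp add: err_X)
    with x show "x \<in> err_set h n X'"
      by (simp add: err_X err_set_def inputs_def)
  qed
  have "f ` err_set h n X \<subseteq> err_set h n X' - err_set h n X"
  proof
    fix y assume "y \<in> f ` err_set h n X"
    then obtain x where x: "x \<in> err_set h n X" and y: "y = f x"
      by auto
    have "length y = n" "y ! b = (\<not> neutral h)"
      using x y \<open>b < n\<close> \<open>b \<noteq> l\<close> by (auto simp: err_X f_def)
    moreover have "eval X' y = neutral h"
      using x y flip by (simp add: err_X f_def)
    moreover have "\<not> (\<forall>i<n. y ! i = neutral h)"
      using \<open>b < n\<close> \<open>y ! b = (\<not> neutral h)\<close> by auto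
    ultimately have "y \<in> err_set h n X'"
      using wrong_if_eval_neutral[of n y h X'] by (simp add: err_set_def inputs_def)
    moreover have "y \<notin> err_set h n X"
      using \<open>y ! b = (\<not> neutral h)\<close> b by (auto simp: err_X)
    ultimately show "y \<in> err_set h n X' - err_set h n X"
      by simp
  qed
  moreover have "inj_on f {x \<in> err_set h n X. x ! l = v}" for v
  proof (rule inj_onI)
    fix x y
    assume x: "x \<in> {x \<in> err_set h n X. x ! l = v}" and y: "y \<in> {x \<in> err_set h n X. x ! l = v}"
      and "f x = f y"
    then have "length x = length y"
      by (metis f_def length_list_update)
    moreover have "x ! i = y ! i" for i
    proof (cases "i = b \<or> i = l")
      case True
      then show ?thesis using x y b by (auto simp: err_X)
    next
      case False
      then show ?thesis using \<open>f x = f y\<close> by (metis f_def nth_list_update_neq)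
    qed
    ultimately show "x = y"
      by (simp add: list_eq_iff_nth_eq)
  qed
  ultimately have "card (err_set h n X) \<le> 2 * card (err_set h n X' - err_set h n X)"
    by (intro card_le_double_if_inj_on_parts[where P = "\<lambda>x. x ! l"]) auto
  with sub show ?thesis
    by (simp add: much_worse_def)
qed

section \<open>Classification of mutations\<close>

definition canonical :: "fsym \<Rightarrow> nat \<Rightarrow> gp \<Rightarrow> bool" where
  "canonical h n Y = (Y = E \<or> read_once h Y \<and> vars Y \<subseteq> {..<n})"

definition harmless :: "fsym \<Rightarrow> nat \<Rightarrow> gp \<Rightarrow> mop \<Rightarrow> nat \<Rightarrow> fsym \<Rightarrow> gp \<Rightarrow> bool" where
  "harmless h n X op l g X' =
     (\<not> bad_move h n X op l g X' \<and> canonical h n X' \<and> card (vars X') \<le> card (vars X) + 1)"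

lemma harmless_from_E: "l < n \<Longrightarrow> harmless h n E op l g (L l)"
proof -
  assume "l < n"
  have "err_set h n (L l) \<subseteq> err_set h n E"
    by (auto simp: err_set_def wrong_def)
  then have "gen_err h n (L l) \<le> gen_err h n E"
    by (simp add: gen_err_eq card_mono divide_right_mono)
  with \<open>l < n\<close> show ?thesis
    by (simp add: harmless_def bad_move_def canonical_def)
qed

lemma harmless_insertion:
  assumes X: "read_once h X" "vars X \<subseteq> {..<n}" and p: "p \<in> positions X"
    and l: "l \<notin> vars X" "l < n"
  shows "harmless h n X INS l h (repl X p (if b then N h (subt X p) (L l) else N h (L l) (subt X p)))"
    (is "harmless h n X INS l h (repl X p ?u)")
proof -
  define S where "S = subt X p"
  have vars_X: "vars X = vars_outside X p \<union> vars S"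
    using vars_split_at[OF p] by (simp add: S_def)
  have "read_once h ?u"
    using read_once_subt[OF X(1) p] l vars_X by (auto simp: S_def)
  then have X': "read_once h (repl X p ?u)"
    using read_once_repl[OF X(1) p] read_once_vars_outside_disjoint[OF X(1) p] l vars_X
    by (auto simp: S_def)
  have vars_X': "vars (repl X p ?u) = insert l (vars X)"
    using vars_repl[OF p] vars_X by (auto simp: S_def)
  have "gen_err h n (repl X p ?u) \<le> gen_err h n X"
    using gen_err_antimono[OF computes_read_once[OF X(1)] X(2) computes_read_once[OF X']]
      vars_X' X(2) l by (simp add: card_insert_if)
  with X' vars_X' show ?thesis
    using X(2) l by (simp add: harmless_def bad_move_def canonical_def card_insert_if)
qed

lemma much_worse_insertion:
  assumes X: "read_once h X" "vars X \<subseteq> {..<n}" and p: "p \<in> positions X"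
    and l: "l \<notin> vars X" "l < n" and "g \<noteq> h"
  shows "much_worse h n X (repl X p (if b then N g (subt X p) (L l) else N g (L l) (subt X p)))"
    (is "much_worse h n X ?X'")
proof -
  define S where "S = subt X p"
  have S: "read_once h S"
    using read_once_subt[OF X(1) p] by (simp add: S_def)
  obtain b0 where b0: "b0 \<in> vars S"
    using read_once_vars_nonempty[OF S] by blast
  have vars_X: "vars X = vars_outside X p \<union> vars S" and disj: "vars_outside X p \<inter> vars S = {}"
    using vars_split_at[OF p] read_once_vars_outside_disjoint[OF X(1) p] by (simp_all add: S_def)
  have eval_X': "(eval ?X' x = neutral h) =
      ((\<forall>i\<in>vars_outside X p. x ! i = neutral h) \<and> (eval S x = neutral h \<or> x ! l = neutral h))" for x
    using eval_repl_eq_neutral_iff[OF X(1) p] apply_f_other_eq_neutral_iff[OF \<open>g \<noteq> h\<close>]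
    by (cases b) (simp_all add: S_def, blast)
  show ?thesis
  proof (rule much_worse_by_flip[OF computes_read_once[OF X(1)] X(2) _ l])
    show "b0 \<in> vars X"
      using b0 vars_X by blast
    show "eval ?X' x = neutral h" if "eval X x = neutral h" for x
      using that computes_eval[OF computes_read_once[OF X(1)]] computes_eval[OF computes_read_once[OF S]]
        eval_X' vars_X by auto
    show "eval ?X' (x[b0 := \<not> neutral h, l := neutral h]) = neutral h"
      if x: "length x = n" "\<forall>i\<in>vars X. x ! i = neutral h" for x
    proof -
      have "x[b0 := \<not> neutral h, l := neutral h] ! i = neutral h" if i: "i \<in> vars_outside X p" for i
      proof -
        have "i \<noteq> b0" "i \<noteq> l"
          using i b0 disj l vars_X by auto
        then show ?thesis
          using i x(2) vars_X by simp
      qed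
      then show ?thesis
        using x(1) l by (simp add: eval_X')
    qed
  qed
qed

lemma much_worse_deletion:
  assumes X: "read_once h X" "vars X \<subseteq> {..<n}" and p: "p \<in> positions X"
  shows "much_worse h n X (del_at X p)"
proof (cases "p = []")
  case True
  then show ?thesis
    using much_worse_E[OF computes_read_once[OF X(1)] X(2) read_once_vars_nonempty[OF X(1)]]
    by (simp add: del_at_def)
next
  case False
  define q d where "q = butlast p" and "d = last p"
  have "p = q @ [d]"
    using False by (simp add: q_def d_def)
  then have q: "q \<in> positions X" and "[d] \<in> positions (subt X q)"
    using p positions_append by auto
  then obtain g a b where Y: "subt X q = N g a b"
    by (cases "subt X q") auto
  define sib where "sib = (if d then a else b)"
  have del: "del_at X p = repl X q sib"
    using False Y by (cases d) (simp_all add: del_at_def q_def d_def sib_def subt_append)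
  have Y_read_once: "read_once h (N g a b)"
    using read_once_subt[OF X(1) q] Y by simp
  then have "read_once h sib"
    by (simp add: sib_def)
  have vars_X: "vars X = vars_outside X q \<union> vars a \<union> vars b"
    using vars_split_at[OF q] Y by auto
  have "vars_outside X q \<inter> (vars a \<union> vars b) = {}"
    using read_once_vars_outside_disjoint[OF X(1) q] Y by simp
  moreover have "vars (if d then b else a) \<noteq> {}" "vars a \<inter> vars b = {}"
    using Y_read_once read_once_vars_nonempty[of h a] read_once_vars_nonempty[of h b] by auto
  ultimately have "vars_outside X q \<union> vars sib \<subset> vars X"
    using vars_X by (cases d) (auto simp: sib_def)
  moreover have "computes h (vars_outside X q \<union> vars sib) (del_at X p)"
    using computes_repl[OF X(1) q computes_read_once[OF \<open>read_once h sib\<close>]] by (simp add: del)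
  ultimately show ?thesis
    using much_worse_if_computes_fewer[OF computes_read_once[OF X(1)] X(2)] by blast
qed

lemma substitution_cases:
  assumes X: "read_once h X" "vars X \<subseteq> {..<n}" and p: "p \<in> leafpos X" and l: "l < n"
  shows "harmless h n X SUB l g (repl X p (L l)) \<or> much_worse h n X (repl X p (L l))"
proof -
  obtain j where p': "p \<in> positions X" and j: "subt X p = L j"
    using leafpos_subt_leaf[OF p] by blast
  define Out where "Out = vars_outside X p"
  have vars_X: "vars X = insert j Out" and "j \<notin> Out"
    using vars_split_at[OF p'] read_once_vars_outside_disjoint[OF X(1) p'] j by (auto simp: Out_def)
  have computes_X': "computes h (Out \<union> {l}) (repl X p (L l))"
    using computes_repl[OF X(1) p' computes_leaf] by (simp add: Out_def)
  show ?thesis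
  proof (cases "l \<in> Out")
    case True
    then have "much_worse h n X (repl X p (L l))"
      using much_worse_if_computes_fewer[OF computes_read_once[OF X(1)] X(2)] computes_X'
        vars_X \<open>j \<notin> Out\<close> by (simp add: insert_absorb psubset_insert_iff)
    then show ?thesis ..
  next
    case False
    have "read_once h (repl X p (L l))"
      using read_once_repl[OF X(1) p'] False by (simp add: Out_def)
    moreover have vars_X': "vars (repl X p (L l)) = insert l Out"
      using vars_repl[OF p'] by (simp add: Out_def)
    moreover have "card (insert l Out) = card (vars X)"
      using vars_X False \<open>j \<notin> Out\<close> finite_vars[of X] by (simp add: card_insert_if)
    ultimately have "gen_err h n (repl X p (L l)) \<le> gen_err h n X"
      using gen_err_antimono[OF computes_read_once[OF X(1)] X(2) computes_read_once] l X(2) vars_X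
      by simp
    then show ?thesis
      using \<open>read_once h (repl X p (L l))\<close> vars_X' \<open>card (insert l Out) = card (vars X)\<close> l X(2) vars_X
      by (simp add: harmless_def bad_move_def canonical_def)
  qed
qed

lemma set_pmf_hvl_E:
  assumes "n > 0" "(op, l, g, X') \<in> set_pmf (hvl n E)"
  shows "l < n \<and> X' = L l"
  using assms by (auto simp: hvl_def lessThan_empty_iff)

lemma set_pmf_hvl:
  assumes "n > 0" "read_once h X" "(op, l, g, X') \<in> set_pmf (hvl n X)"
  shows "l < n"
    and "op = INS \<Longrightarrow> \<exists>p\<in>positions X. \<exists>b.
           X' = repl X p (if b then N g (subt X p) (L l) else N g (L l) (subt X p))"
    and "op = DEL \<Longrightarrow> \<exists>p\<in>positions X. X' = del_at X p"
    and "op = SUB \<Longrightarrow> \<exists>p\<in>leafpos X. X' = repl X p (L l)"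
proof -
  have "X \<noteq> E"
    using assms(2) by auto
  moreover from this have "positions X \<noteq> {}" "leafpos X \<noteq> {}"
    using read_once_leafpos_nonempty[OF assms(2)] Nil_in_positions_iff[of X] by blast+
  ultimately show "l < n"
    and "op = INS \<Longrightarrow> \<exists>p\<in>positions X. \<exists>b.
           X' = repl X p (if b then N g (subt X p) (L l) else N g (L l) (subt X p))"
    and "op = DEL \<Longrightarrow> \<exists>p\<in>positions X. X' = del_at X p"
    and "op = SUB \<Longrightarrow> \<exists>p\<in>leafpos X. X' = repl X p (L l)"
    using assms by (auto simp: hvl_def lessThan_empty_iff split: mop.splits)
qed

lemma mutation_cases:
  assumes "n > 0" "canonical h n X" and m: "(op, l, g, X') \<in> set_pmf (hvl n X)"
  shows "(op = INS \<and> l \<in> vars X) \<or> harmless h n X op l g X' \<or> much_worse h n X X'"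
proof (cases "X = E")
  case True
  then show ?thesis
    using set_pmf_hvl_E[OF assms(1)] m harmless_from_E by blast
next
  case False
  then have X: "read_once h X" "vars X \<subseteq> {..<n}"
    using assms(2) by (auto simp: canonical_def)
  note support = set_pmf_hvl[OF assms(1) X(1) m]
  show ?thesis
  proof (cases op)
    case INS
    then obtain p b where p: "p \<in> positions X"
      and X': "X' = repl X p (if b then N g (subt X p) (L l) else N g (L l) (subt X p))"
      using support(2) by blast
    show ?thesis
    proof (cases "l \<in> vars X")
      case False
      then show ?thesis
        using harmless_insertion[OF X p False support(1), of b]
          much_worse_insertion[OF X p False support(1), of g b]
        by (cases "g = h"; cases b) (simp_all add: X' INS)
    qed (simp add: INS)
  next
    case DEL
    then show ?thesis
      using support(3) much_worse_deletion[OF X] by blast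
  next
    case SUB
    then show ?thesis
      using support(1,4) substitution_cases[OF X] by blast
  qed
qed

lemma map_pmf_hvl_literal: "n > 0 \<Longrightarrow> map_pmf (\<lambda>m. fst (snd m)) (hvl n X) = pmf_of_set {..<n}"
  by (simp add: hvl_def map_bind_pmf map_pmf_comp bind_return_pmf')

lemma prob_hvl_literal_in_vars:
  assumes "n > 0"
  shows "measure_pmf.prob (hvl n X) {m. fst (snd m) \<in> vars X} \<le> card (vars X) / n"
proof -
  have "measure_pmf.prob (hvl n X) {m. fst (snd m) \<in> vars X}
      = measure_pmf.prob (map_pmf (\<lambda>m. fst (snd m)) (hvl n X)) (vars X)"
    by (simp add: vimage_def)
  also have "\<dots> = card ({..<n} \<inter> vars X) / n"
    using assms by (simp add: map_pmf_hvl_literal measure_pmf_of_set lessThan_empty_iff)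
  also have "\<dots> \<le> card (vars X) / n"
    by (intro divide_right_mono) (auto intro: card_mono)
  finally show ?thesis .
qed

section \<open>Acceptance probabilities\<close>

lemma measure_bind_pmf:
  "measure_pmf.prob (bind_pmf M f) A = measure_pmf.expectation M (\<lambda>x. measure_pmf.prob (f x) A)"
  unfolding measure_pmf_bind
  by (subst measure_pmf.measure_bind[where N = "count_space UNIV"]) (auto simp: measure_subprob)

lemma measure_bind_pmf_le:
  assumes "\<And>x. x \<in> set_pmf M \<Longrightarrow> x \<notin> A \<Longrightarrow> measure_pmf.prob (f x) B \<le> e" "0 \<le> e"
  shows "measure_pmf.prob (bind_pmf M f) B \<le> measure_pmf.prob M A + e"
proof -
  have "measure_pmf.prob (bind_pmf M f) B = measure_pmf.expectation M (\<lambda>x. measure_pmf.prob (f x) B)"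
    by (rule measure_bind_pmf)
  also have "\<dots> \<le> measure_pmf.expectation M (\<lambda>x. indicator A x + e)"
  proof (rule integral_mono_AE)
    show "integrable (measure_pmf M) (\<lambda>x. measure_pmf.prob (f x) B)"
      by (rule measure_pmf.integrable_const_bound[where B = 1]) auto
    show "integrable (measure_pmf M) (\<lambda>x. indicator A x + e)"
      by (rule measure_pmf.integrable_const_bound[where B = "1 + \<bar>e\<bar>"]) (auto simp: indicator_def)
    show "AE x in measure_pmf M. measure_pmf.prob (f x) B \<le> indicator A x + e"
      using assms
      by (auto simp: AE_measure_pmf_iff indicator_def intro: order.trans[OF measure_pmf.prob_le_1])
  qed
  also have "\<dots> = measure_pmf.prob M A + e"
    by (subst Bochner_Integration.integral_add) (auto simp: measure_pmf.emeasure_eq_measure)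
  finally show ?thesis .
qed

lemma inputs_nonempty: "inputs n \<noteq> {}"
  using card_inputs[of n] by auto

lemma set_pmf_sample: "T \<in> set_pmf (sample k n) \<Longrightarrow> set T \<subseteq> inputs n"
  by (induction k arbitrary: T) (fastforce simp: inputs_nonempty)+

lemma prob_sample_avoids:
  assumes "D \<subseteq> inputs n"
  shows "measure_pmf.prob (sample k n) {T. set T \<inter> D = {}} = (1 - card D / 2 ^ n) ^ k"
proof (induction k)
  case 0
  then show ?case by simp
next
  case (Suc k)
  define r where "r = 1 - card D / 2 ^ n"
  have "measure_pmf.prob (sample (Suc k) n) {T. set T \<inter> D = {}} =
      measure_pmf.expectation (pmf_of_set (inputs n))
        (\<lambda>x. measure_pmf.prob (map_pmf ((#) x) (sample k n)) {T. set T \<inter> D = {}})"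
    by (simp add: measure_bind_pmf)
  also have "\<dots> = measure_pmf.expectation (pmf_of_set (inputs n)) (\<lambda>x. if x \<in> D then 0 else r ^ k)"
    by (rule Bochner_Integration.integral_cong) (auto simp: Suc r_def vimage_def)
  also have "\<dots> = real (card (inputs n - D)) * r ^ k / 2 ^ n"
    by (simp add: integral_pmf_of_set inputs_nonempty card_inputs sum.If_cases Diff_eq Int_commute)
  also have "\<dots> = r ^ Suc k"
  proof -
    have "card D \<le> 2 ^ n"
      using card_mono[OF finite_inputs assms] by (simp add: card_inputs)
    then show ?thesis
      using assms finite_subset[OF assms]
      by (simp add: card_Diff_subset card_inputs of_nat_diff r_def field_simps)
  qed
  finally show ?case
    by (simp add: r_def)
qed

lemma length_filter_less_if_mono:
  assumes "\<forall>y\<in>set T. P y \<longrightarrow> Q y" "x \<in> set T" "Q x" "\<not> P x"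
  shows "length (filter P T) < length (filter Q T)"
proof -
  have "filter P T = filter P (filter Q T)"
    using assms(1) by (auto simp: filter_filter intro: filter_cong)
  then show ?thesis
    using length_filter_less[of x "filter Q T" P] assms(2-4) by simp
qed

lemma ln_le_lg: "1 \<le> n \<Longrightarrow> ln (real n) \<le> lg n"
proof -
  assume "1 \<le> n"
  then have "ln (real n) * ln 2 \<le> ln (real n)"
    using ln_2_less_1 by (intro mult_left_le) auto
  then show ?thesis
    by (simp add: lg_def log_def le_divide_eq)
qed

lemma one_minus_power_le_exp:
  fixes d :: real
  assumes "d \<le> 1"
  shows "(1 - d) ^ s \<le> exp (- (real s * d))"
proof -
  have "(1 - d) ^ s \<le> exp (- d) ^ s"
    using assms exp_minus_ge[of d] by (intro power_mono) auto
  then show ?thesis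
    by (simp add: exp_of_nat_mult[symmetric])
qed

lemma prob_accept_much_worse:
  assumes worse: "much_worse h n X X'" and n: "n \<ge> 2" and c': "c' \<ge> 8"
    and window: "c' / 4 * lg n < real s * gen_err h n X"
  shows "measure_pmf.prob (sample s n) {T. samp_err h n T X' \<le> samp_err h n T X} \<le> 1 / n"
proof -
  define D where "D = err_set h n X' - err_set h n X"
  define d where "d = card D / 2 ^ n"
  have D: "D \<subseteq> inputs n"
    by (auto simp: D_def err_set_def)
  have "{T. samp_err h n T X' \<le> samp_err h n T X} \<inter> set_pmf (sample s n) \<subseteq> {T. set T \<inter> D = {}}"
  proof safe
    fix T x
    assume "samp_err h n T X' \<le> samp_err h n T X" "T \<in> set_pmf (sample s n)" "x \<in> set T" "x \<in> D"
    moreover have "\<forall>y\<in>set T. wrong h n X y \<longrightarrow> wrong h n X' y"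
      using worse set_pmf_sample[OF \<open>T \<in> set_pmf (sample s n)\<close>]
      by (auto simp: much_worse_def err_set_def)
    ultimately show "x \<in> {}"
      using length_filter_less_if_mono[of T "wrong h n X" "wrong h n X'" x]
      by (auto simp: samp_err_def D_def err_set_def)
  qed
  then have "measure_pmf.prob (sample s n) {T. samp_err h n T X' \<le> samp_err h n T X}
      \<le> measure_pmf.prob (sample s n) {T. set T \<inter> D = {}}"
    by (subst measure_Int_set_pmf[symmetric]) (rule measure_pmf.finite_measure_mono, auto)
  also have "\<dots> = (1 - d) ^ s"
    using prob_sample_avoids[OF D] by (simp add: d_def)
  also have "\<dots> \<le> exp (- (real s * d))"
  proof (rule one_minus_power_le_exp)
    show "d \<le> 1"
      using card_mono[OF finite_inputs D] by (simp add: d_def card_inputs)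
  qed
  also have "\<dots> \<le> exp (- ln n)"
  proof -
    have "gen_err h n X \<le> 2 * d"
      using worse by (simp add: much_worse_def gen_err_eq d_def D_def divide_right_mono)
    then have "real s * gen_err h n X \<le> 2 * (real s * d)"
      by (metis mult.left_commute mult_left_mono of_nat_0_le_iff)
    moreover have "ln n \<le> c' / 8 * lg n"
    proof -
      have "0 \<le> ln n" "ln n \<le> lg n"
        using n ln_le_lg[of n] by auto
      then show ?thesis
        using c' mult_right_mono[of 1 "c' / 8" "lg n"] by linarith
    qed
    ultimately show ?thesis
      using window by simp
  qed
  also have "\<dots> = 1 / n"
    using n by (simp add: exp_minus inverse_eq_divide)
  finally show ?thesis .
qed

lemma prob_accept_harmful_mutation:
  assumes n: "n \<ge> 2" and c': "c' \<ge> 8" and "canonical h n X"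
    and m: "(op, l, g, X') \<in> set_pmf (hvl n X)" "l \<notin> vars X"
    and window: "c' / 4 * lg n < real s * gen_err h n X"
  shows "measure_pmf.prob (sample s n)
    {T. \<not> harmless h n X op l g X' \<and> samp_err h n T X' \<le> samp_err h n T X} \<le> 1 / n"
proof (cases "harmless h n X op l g X'")
  case True
  then show ?thesis
    by simp
next
  case False
  have "n > 0"
    using n by simp
  then have "much_worse h n X X'"
    using mutation_cases[OF _ \<open>canonical h n X\<close> m(1)] m(2) False by simp
  then show ?thesis
    using prob_accept_much_worse[OF _ n c' window] False by simp
qed

definition safe :: "fsym \<Rightarrow> nat \<Rightarrow> nat \<Rightarrow> gp \<times> bool \<times> bool \<Rightarrow> bool" where
  "safe h n t st = (case st of (X, _, bad) \<Rightarrow> \<not> bad \<and> canonical h n X \<and> card (vars X) \<le> t)"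

lemma prob_step_unsafe:
  assumes n: "n \<ge> 2" and c': "c' \<ge> 8" and "safe h n t st"
  shows "measure_pmf.prob (step c c' n sizelim h st) {st'. \<not> safe h n (Suc t) st'} \<le> (real t + 1) / n"
proof -
  obtain X stopped where st: "st = (X, stopped, False)" and X: "canonical h n X" "card (vars X) \<le> t"
    using \<open>safe h n t st\<close> by (cases st) (auto simp: safe_def)
  show ?thesis
  proof (cases "stopped \<or> real (tsize c n) * gen_err h n X \<le> c' / 4 * lg n")
    case True
    then have "step c c' n sizelim h st = return_pmf (X, True, False)"
      by (auto simp: step_def st)
    then show ?thesis
      using X by (simp add: safe_def)
  next
    case False
    define s where "s = tsize c n"
    have window: "c' / 4 * lg n < real s * gen_err h n X"
      using False by (simp add: s_def)
    define next_state where "next_state T m =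
      (if real (samp_err h n T X) \<le> c' * lg n then (X, True, False)
       else case m of (op, l, g, X') \<Rightarrow>
         let acc = (leafcount X' \<le> sizelim \<and> samp_err h n T X' \<le> samp_err h n T X)
         in (if acc then X' else X, False, False \<or> (acc \<and> bad_move h n X op l g X')))" for T m
    have "step c c' n sizelim h st = bind_pmf (sample s n) (\<lambda>T. bind_pmf (hvl n X) (\<lambda>m. return_pmf (next_state T m)))"
      using False by (auto simp: step_def st s_def next_state_def map_pmf_def intro!: bind_pmf_cong)
    txt \<open>Drawing the mutation before the training set bounds the acceptance of each fixed
      mutation over the samples alone.\<close>
    also have "\<dots> = bind_pmf (hvl n X) (\<lambda>m. map_pmf (\<lambda>T. next_state T m) (sample s n))"
      by (subst bind_commute_pmf) (simp add: map_pmf_def)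
    finally have step_eq: "step c c' n sizelim h st = \<dots>" .
    define Dup where "Dup = {m :: mop \<times> nat \<times> fsym \<times> gp. fst (snd m) \<in> vars X}"
    have "measure_pmf.prob (step c c' n sizelim h st) {st'. \<not> safe h n (Suc t) st'}
        \<le> measure_pmf.prob (hvl n X) Dup + 1 / n"
      unfolding step_eq
    proof (rule measure_bind_pmf_le)
      fix m assume m: "m \<in> set_pmf (hvl n X)" "m \<notin> Dup"
      obtain op l g X' where m_eq: "m = (op, l, g, X')"
        by (cases m) auto
      have "{T. \<not> safe h n (Suc t) (next_state T m)} \<subseteq>
          {T. \<not> harmless h n X op l g X' \<and> samp_err h n T X' \<le> samp_err h n T X}"
        using X by (auto simp: next_state_def m_eq safe_def harmless_def Let_def)
      then have "measure_pmf.prob (sample s n) {T. \<not> safe h n (Suc t) (next_state T m)}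
          \<le> measure_pmf.prob (sample s n)
               {T. \<not> harmless h n X op l g X' \<and> samp_err h n T X' \<le> samp_err h n T X}"
        by (rule measure_pmf.finite_measure_mono) simp
      also have "\<dots> \<le> 1 / n"
      proof (rule prob_accept_harmful_mutation[OF n c' X(1) _ _ window])
        show "(op, l, g, X') \<in> set_pmf (hvl n X)" "l \<notin> vars X"
          using m by (simp_all add: m_eq Dup_def)
      qed
      finally show "measure_pmf.prob (map_pmf (\<lambda>T. next_state T m) (sample s n)) {st'. \<not> safe h n (Suc t) st'} \<le> 1 / n"
        by (simp add: vimage_def)
    qed simp
    also have "\<dots> \<le> card (vars X) / n + 1 / n"
      using prob_hvl_literal_in_vars[of n X] n by (simp add: Dup_def)
    also have "\<dots> \<le> (real t + 1) / n"
      using X(2) by (simp add: add_divide_distrib[symmetric] divide_right_mono)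
    finally show ?thesis .
  qed
qed

lemma prob_run_unsafe:
  assumes "n \<ge> 2" "c' \<ge> 8"
  shows "measure_pmf.prob (run c c' n sizelim h t) {st. \<not> safe h n t st} \<le> real t * (real t + 1) / n"
proof (induction t)
  case 0
  then show ?case by (simp add: safe_def canonical_def)
next
  case (Suc t)
  have "measure_pmf.prob (run c c' n sizelim h (Suc t)) {st. \<not> safe h n (Suc t) st}
      \<le> measure_pmf.prob (run c c' n sizelim h t) {st. \<not> safe h n t st} + (real t + 1) / n"
    by simp (rule measure_bind_pmf_le, use prob_step_unsafe[OF assms] in auto)
  also have "\<dots> \<le> (real t * (real t + 1) + (real t + 1)) / n"
    using Suc by (simp add: add_divide_distrib)
  also have "\<dots> \<le> real (Suc t) * (real (Suc t) + 1) / n"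
    by (intro divide_right_mono) (auto simp: algebra_simps)
  finally show ?case .
qed

lemma lg_ge_1: "n \<ge> 2 \<Longrightarrow> 1 \<le> lg n"
  by (simp add: lg_def)

lemma nat_ceiling_quadratic_le:
  fixes K x :: real
  assumes "K > 0" "x \<ge> 1"
  shows "real (nat \<lceil>K * x\<rceil>) * (real (nat \<lceil>K * x\<rceil>) + 1) \<le> (K + 1) * (K + 2) * x\<^sup>2"
proof -
  define T where "T = real (nat \<lceil>K * x\<rceil>)"
  have "T = of_int \<lceil>K * x\<rceil>"
    using assms by (simp add: T_def)
  then have "T \<le> K * x + 1" "0 \<le> T"
    using ceiling_correct[of "K * x"] by (auto simp: T_def)
  then have "T * (T + 1) \<le> (K * x + 1) * (K * x + 2)"
    by (intro mult_mono) auto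
  also have "\<dots> \<le> (K * x + x) * (K * x + 2 * x)"
    using assms by (intro mult_mono) auto
  also have "\<dots> = (K + 1) * (K + 2) * x\<^sup>2"
    by (simp add: algebra_simps power2_eq_square)
  finally show ?thesis
    by (simp add: T_def)
qed

lemma prob_bad_acceptance_le:
  assumes c': "c' \<ge> 8" and K: "K > 0" and n: "n \<ge> 2"
  shows "measure_pmf.prob (run c c' n sizelim h (nat \<lceil>K * lg n\<rceil>)) {st. snd (snd st)}
    \<le> (K + 1) * (K + 2) * (lg n)^2 / n"
proof -
  let ?T = "nat \<lceil>K * lg n\<rceil>"
  have "measure_pmf.prob (run c c' n sizelim h ?T) {st. snd (snd st)}
      \<le> measure_pmf.prob (run c c' n sizelim h ?T) {st. \<not> safe h n ?T st}"
    by (rule measure_pmf.finite_measure_mono) (auto simp: safe_def)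
  also have "\<dots> \<le> real ?T * (real ?T + 1) / n"
    by (rule prob_run_unsafe[OF n c'])
  also have "\<dots> \<le> (K + 1) * (K + 2) * (lg n)^2 / n"
    using K lg_ge_1[OF n] by (intro divide_right_mono nat_ceiling_quadratic_le) auto
  finally show ?thesis .
qed

theorem lemma10:
  fixes c :: real
  assumes "c > 0"
  shows "\<exists>c0. \<forall>c' \<ge> c0. \<forall>K > 0. \<exists>C N. \<forall>n \<ge> N. \<forall>sizelim \<ge> n. \<forall>h \<in> {AND, OR}.
           measure_pmf.prob (run c c' n sizelim h (nat \<lceil>K * lg n\<rceil>)) {st. snd (snd st)}
             \<le> C * (lg n)^2 / real n"
  using prob_bad_acceptance_le by blast

end
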